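(* Let $X$ be a Banach space, $F:X\rightrightarrows Y$ a set-valued map with nonempty values, $\bar x\in X$ and $T\in\partial F(\bar x)$. Then $y^*\circ T\in\partial(y^*\circ F)(\bar x)$ for all $y^*\in K^+\setminus\{0\}$.
   Context: $Y$ is a real normed space with dual $Y^*$; $B(X,Y)$ is the space of bounded linear operators $X\to Y$; $B(x,\delta)$ is the open ball and $D_Y$ the closed unit ball. $K\subset Y$ is a pointed closed convex cone and $K^+=\{y^*\in Y^*: y^*(k)\ge0\ \forall k\in K\}$. $\operatorname{Epi}F(x)=F(x)+K$; for nonempty $A,B$, $e(A,B)=\sup_{a\in A}\inf_{b\in B}\|a-b\|$. The Fréchet subdifferential $\widehat\partial F(\bar x)$ is the set of all $T\in B(X,Y)$ such that for every $\varepsilon>0$ there is $\delta>0$ with $F(x)+K\subset F(\bar x)+K+T(x-\bar x)+\varepsilon\|x-\bar x\|D_Y$ for all $x\in B(\bar x,\delta)$. The limiting subdifferential $\partial F(\bar x)$ is the set of all $T\in B(X,Y)$ for which there exist a sequence $x_n\to\bar x$ with $e(\operatorname{Epi}F(x_n),\operatorname{Epi}F(\bar x))\to0$ and operators $T_n\in\widehat\partial F(x_n)$ with $T_n(x)\to T(x)$ for every $x\in X$. Both definitions are also applied to maps $G:X\rightrightarrows\mathbb R$ with $Y=\mathbb R$, $K=[0,\infty)$. For $y^*\in Y^*$, $y^*\circ F$ is $x\mapsto\{y^*(y):y\in F(x)\}$. *)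

theory Defs
  imports "HOL-Analysis.Analysis"
begin

definition pointed_closed_convex_cone :: "'b::real_normed_vector set \<Rightarrow> bool" where
  "pointed_closed_convex_cone K \<longleftrightarrow>
     closed K \<and> convex K \<and> cone K \<and> K \<inter> uminus ` K = {0}"

definition dual_cone :: "'b::real_normed_vector set \<Rightarrow> ('b \<Rightarrow> real) set" where
  "dual_cone K = {ys. bounded_linear ys \<and> (\<forall>k\<in>K. ys k \<ge> 0)}"

definition Epi :: "('a \<Rightarrow> 'b::real_normed_vector set) \<Rightarrow> 'b set \<Rightarrow> 'a \<Rightarrow> 'b set" where
  "Epi F K x = {y + k | y k. y \<in> F x \<and> k \<in> K}"

definition excess :: "'b::real_normed_vector set \<Rightarrow> 'b set \<Rightarrow> ereal" where
  "excess A B = (SUP a\<in>A. INF b\<in>B. ereal (norm (a - b)))"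

definition frechet_subdiff ::
  "'b::real_normed_vector set \<Rightarrow> ('a::real_normed_vector \<Rightarrow> 'b set) \<Rightarrow> 'a \<Rightarrow> ('a \<Rightarrow> 'b) set" where
  "frechet_subdiff K F xb = {T. bounded_linear T \<and>
     (\<forall>\<epsilon>>0. \<exists>\<delta>>0. \<forall>x\<in>ball xb \<delta>.
        Epi F K x \<subseteq> {w + T (x - xb) + (\<epsilon> * norm (x - xb)) *\<^sub>R d | w d.
                           w \<in> Epi F K xb \<and> d \<in> cball 0 1})}"

definition limiting_subdiff ::
  "'b::real_normed_vector set \<Rightarrow> ('a::real_normed_vector \<Rightarrow> 'b set) \<Rightarrow> 'a \<Rightarrow> ('a \<Rightarrow> 'b) set" where
  "limiting_subdiff K F xb = {T. bounded_linear T \<and>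
     (\<exists>xs Ts. xs \<longlonglongrightarrow> xb
        \<and> (\<lambda>n. excess (Epi F K (xs n)) (Epi F K xb)) \<longlonglongrightarrow> 0
        \<and> (\<forall>n. Ts n \<in> frechet_subdiff K F (xs n))
        \<and> (\<forall>x. (\<lambda>n. Ts n x) \<longlonglongrightarrow> T x))}"

end

theory Submission
  imports Defs
begin

text \<open>Write \<open>G x = y\<^sup>* ` F x\<close> and fix \<open>c > 0\<close> with \<open>\<bar>y\<^sup>* d\<bar> \<le> c \<parallel>d\<parallel>\<close>. Since \<open>y\<^sup>*\<close> is
  linear and nonnegative on \<open>K\<close>, it maps \<open>F x + K\<close> into \<open>G x + [0,\<infinity>)\<close>, and every point of
  \<open>G x + [0,\<infinity>)\<close> is the image of a point of \<open>F x\<close> plus a nonnegative number. Hence an inclusion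
  \<open>F x + K \<subseteq> F x' + K + T(x - x') + \<epsilon> \<parallel>x - x'\<parallel> D\<^sub>Y\<close> becomes, after applying \<open>y\<^sup>*\<close>, the
  corresponding inclusion for \<open>G\<close> and \<open>y\<^sup>* \<circ> T\<close> with \<open>c \<epsilon>\<close> in place of \<open>\<epsilon>\<close>, and the excess of
  the epigraphs of \<open>G\<close> is at most \<open>c\<close> times that of \<open>F\<close>. So the sequences witnessing
  \<open>T \<in> \<partial>F(x\<^sub>0)\<close>, composed with \<open>y\<^sup>*\<close>, witness \<open>y\<^sup>* \<circ> T \<in> \<partial>(y\<^sup>* \<circ> F)(x\<^sub>0)\<close>.\<close>

lemma Epi_image_nonneg:
  "Epi (\<lambda>x. f ` F x) {0..} x = {f y + s | y s. y \<in> F x \<and> 0 \<le> s}"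
  unfolding Epi_def by auto

lemma subset_Epi: "0 \<in> K \<Longrightarrow> F x \<subseteq> Epi F K x"
  unfolding Epi_def by force

lemma dual_cone_image_Epi:
  assumes "ys \<in> dual_cone K" and "e \<in> Epi F K x" and "0 \<le> s"
  shows "ys e + s \<in> Epi (\<lambda>x. ys ` F x) {0..} x"
proof -
  obtain y k where "e = y + k" "y \<in> F x" "k \<in> K"
    using assms(2) unfolding Epi_def by blast
  moreover have "bounded_linear ys" "0 \<le> ys k"
    using assms(1) \<open>k \<in> K\<close> unfolding dual_cone_def by auto
  ultimately have "ys e + s = ys y + (ys k + s)" "0 \<le> ys k + s"
    using \<open>0 \<le> s\<close> by (simp_all add: linear_add bounded_linear.linear)
  with \<open>y \<in> F x\<close> show ?thesis unfolding Epi_image_nonneg by blast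
qed

lemma excess_nonneg: "A \<noteq> {} \<Longrightarrow> 0 \<le> excess A B"
  unfolding excess_def by (metis INF_greatest SUP_upper2 ereal_less_eq(5) ex_in_conv norm_ge_zero)

lemma excess_le_cmult:
  assumes "0 < c"
    and "\<And>a'. a' \<in> A' \<Longrightarrow> \<exists>a\<in>A. \<forall>b\<in>B. \<exists>b'\<in>B'. norm (a' - b') \<le> c * norm (a - b)"
  shows "excess A' B' \<le> ereal c * excess A B"
  unfolding excess_def
proof (rule SUP_least)
  fix a' assume "a' \<in> A'"
  then obtain a where "a \<in> A" and near: "\<forall>b\<in>B. \<exists>b'\<in>B'. norm (a' - b') \<le> c * norm (a - b)"
    using assms(2) by blast
  have "(INF b'\<in>B'. ereal (norm (a' - b'))) \<le> (INF b\<in>B. ereal c * ereal (norm (a - b)))"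
    using near by (intro INF_mono) (metis ereal_less_eq(3) times_ereal.simps(1))
  also have "\<dots> = ereal c * (INF b\<in>B. ereal (norm (a - b)))"
    using ereal_Inf_cmult[OF \<open>0 < c\<close>, of "\<lambda>x. x \<in> (\<lambda>b. ereal (norm (a - b))) ` B"]
    by (simp add: image_image setcompr_eq_image)
  also have "\<dots> \<le> ereal c * (SUP a\<in>A. INF b\<in>B. ereal (norm (a - b)))"
    using \<open>0 < c\<close> \<open>a \<in> A\<close> by (intro ereal_mult_left_mono SUP_upper) auto
  finally show "(INF b'\<in>B'. ereal (norm (a' - b'))) \<le> \<dots>" .
qed

lemma excess_Epi_image_le:
  assumes "0 \<in> K" and "ys \<in> dual_cone K"
    and "0 < c" and bound: "\<And>d. \<bar>ys d\<bar> \<le> c * norm d"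
  shows "excess (Epi (\<lambda>x. ys ` F x) {0..} x) (Epi (\<lambda>x. ys ` F x) {0..} x')
           \<le> ereal c * excess (Epi F K x) (Epi F K x')"
proof (rule excess_le_cmult[OF \<open>0 < c\<close>])
  have lin: "linear ys" using assms(2) unfolding dual_cone_def by (auto dest: bounded_linear.linear)
  fix a' assume "a' \<in> Epi (\<lambda>x. ys ` F x) {0..} x"
  then obtain y s where a': "a' = ys y + s" "y \<in> F x" "0 \<le> s"
    unfolding Epi_image_nonneg by blast
  show "\<exists>a\<in>Epi F K x. \<forall>e\<in>Epi F K x'.
      \<exists>b'\<in>Epi (\<lambda>x. ys ` F x) {0..} x'. norm (a' - b') \<le> c * norm (a - e)"
  proof (intro bexI[of _ y] ballI)
    fix e assume "e \<in> Epi F K x'"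
    show "\<exists>b'\<in>Epi (\<lambda>x. ys ` F x) {0..} x'. norm (a' - b') \<le> c * norm (y - e)"
    proof
      show "ys e + s \<in> Epi (\<lambda>x. ys ` F x) {0..} x'"
        using dual_cone_image_Epi[OF assms(2) \<open>e \<in> Epi F K x'\<close> \<open>0 \<le> s\<close>] .
      show "norm (a' - (ys e + s)) \<le> c * norm (y - e)"
        using bound[of "y - e"] by (simp add: a'(1) linear_diff[OF lin])
    qed
  next
    show "y \<in> Epi F K x" using subset_Epi[OF assms(1), of F x] a'(2) by blast
  qed
qed

lemma tendsto_excess_Epi_image:
  assumes "0 \<in> K" and "ys \<in> dual_cone K"
    and "0 < c" and bound: "\<And>d. \<bar>ys d\<bar> \<le> c * norm d"
    and "\<forall>x. F x \<noteq> {}"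
    and "(\<lambda>n. excess (Epi F K (xs n)) (Epi F K x\<^sub>0)) \<longlonglongrightarrow> 0"
  shows "(\<lambda>n. excess (Epi (\<lambda>x. ys ` F x) {0..} (xs n)) (Epi (\<lambda>x. ys ` F x) {0..} x\<^sub>0))
           \<longlonglongrightarrow> 0"
proof (rule tendsto_sandwich)
  have "Epi (\<lambda>x. ys ` F x) {0..} x \<noteq> {}" for x
    using assms(5) subset_Epi[of "{0..}" "\<lambda>x. ys ` F x" x] by auto
  then show "\<forall>\<^sub>F n in sequentially.
      0 \<le> excess (Epi (\<lambda>x. ys ` F x) {0..} (xs n)) (Epi (\<lambda>x. ys ` F x) {0..} x\<^sub>0)"
    by (simp add: excess_nonneg)
  show "\<forall>\<^sub>F n in sequentially.
      excess (Epi (\<lambda>x. ys ` F x) {0..} (xs n)) (Epi (\<lambda>x. ys ` F x) {0..} x\<^sub>0)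
        \<le> ereal c * excess (Epi F K (xs n)) (Epi F K x\<^sub>0)"
    by (intro always_eventually allI excess_Epi_image_le[OF assms(1-3) bound])
  show "(\<lambda>n. ereal c * excess (Epi F K (xs n)) (Epi F K x\<^sub>0)) \<longlonglongrightarrow> 0"
    using tendsto_cmult_ereal[OF _ assms(6), of "ereal c"] by simp
qed simp

lemma frechet_subdiff_image:
  assumes "0 \<in> K" and "ys \<in> dual_cone K"
    and "0 < c" and bound: "\<And>d. \<bar>ys d\<bar> \<le> c * norm d"
    and "T \<in> frechet_subdiff K F x\<^sub>0"
  shows "ys \<circ> T \<in> frechet_subdiff {0..} (\<lambda>x. ys ` F x) x\<^sub>0"
proof -
  have bys: "bounded_linear ys" using assms(2) unfolding dual_cone_def by auto
  have bT: "bounded_linear T"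
    and frechet: "\<And>\<epsilon>. 0 < \<epsilon> \<Longrightarrow> \<exists>\<delta>>0. \<forall>x\<in>ball x\<^sub>0 \<delta>.
        Epi F K x \<subseteq> {w + T (x - x\<^sub>0) + (\<epsilon> * norm (x - x\<^sub>0)) *\<^sub>R d | w d.
                         w \<in> Epi F K x\<^sub>0 \<and> d \<in> cball 0 1}"
    using assms(5) unfolding frechet_subdiff_def by auto
  have "\<exists>\<delta>>0. \<forall>x\<in>ball x\<^sub>0 \<delta>. Epi (\<lambda>x. ys ` F x) {0..} x \<subseteq>
          {w + (ys \<circ> T) (x - x\<^sub>0) + (\<epsilon> * norm (x - x\<^sub>0)) *\<^sub>R d | w d.
             w \<in> Epi (\<lambda>x. ys ` F x) {0..} x\<^sub>0 \<and> d \<in> cball 0 1}"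
    if "0 < \<epsilon>" for \<epsilon>
  proof -
    obtain \<delta> where "0 < \<delta>" and incl: "\<forall>x\<in>ball x\<^sub>0 \<delta>.
        Epi F K x \<subseteq> {w + T (x - x\<^sub>0) + (\<epsilon> / c * norm (x - x\<^sub>0)) *\<^sub>R d | w d.
                         w \<in> Epi F K x\<^sub>0 \<and> d \<in> cball 0 1}"
      using frechet \<open>0 < \<epsilon>\<close> \<open>0 < c\<close> by (meson divide_pos_pos)
    have "a \<in> {w + (ys \<circ> T) (x - x\<^sub>0) + (\<epsilon> * norm (x - x\<^sub>0)) *\<^sub>R d | w d.
                 w \<in> Epi (\<lambda>x. ys ` F x) {0..} x\<^sub>0 \<and> d \<in> cball 0 1}"
      if "x \<in> ball x\<^sub>0 \<delta>" and "a \<in> Epi (\<lambda>x. ys ` F x) {0..} x" for x a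
    proof -
      obtain y s where a: "a = ys y + s" "y \<in> F x" "0 \<le> s"
        using \<open>a \<in> _\<close> unfolding Epi_image_nonneg by blast
      then obtain e d where y: "y = e + T (x - x\<^sub>0) + (\<epsilon> / c * norm (x - x\<^sub>0)) *\<^sub>R d"
        and "e \<in> Epi F K x\<^sub>0" "norm d \<le> 1"
        using incl \<open>x \<in> ball x\<^sub>0 \<delta>\<close> subset_Epi[OF assms(1), of F x] by fastforce
      have "\<bar>ys d\<bar> \<le> c"
        using bound[of d] mult_left_le[OF \<open>norm d \<le> 1\<close>, of c] \<open>0 < c\<close> by linarith
      then have "\<bar>ys d / c\<bar> \<le> 1"
        using \<open>0 < c\<close> by (simp add: abs_divide pos_divide_le_eq)
      moreover have "a = (ys e + s) + (ys \<circ> T) (x - x\<^sub>0) + (\<epsilon> * norm (x - x\<^sub>0)) * (ys d / c)"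
        using \<open>0 < c\<close> by (simp add: a(1) y linear_add linear_scale bounded_linear.linear[OF bys])
      ultimately show ?thesis
        using dual_cone_image_Epi[OF assms(2) \<open>e \<in> _\<close> \<open>0 \<le> s\<close>]
        by (intro CollectI exI[of _ "ys e + s"] exI[of _ "ys d / c"] conjI) auto
    qed
    with \<open>0 < \<delta>\<close> show ?thesis by blast
  qed
  moreover have "bounded_linear (ys \<circ> T)"
    using bounded_linear_compose[OF bys bT] by (simp add: comp_def)
  ultimately show ?thesis unfolding frechet_subdiff_def by blast
qed

theorem mainTheorem8:
  fixes F :: "'a::banach \<Rightarrow> 'b::real_normed_vector set"
    and K :: "'b set" and xb :: 'a and T :: "'a \<Rightarrow> 'b" and ys :: "'b \<Rightarrow> real"
  assumes "pointed_closed_convex_cone K"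
    and "\<forall>x. F x \<noteq> {}"
    and "T \<in> limiting_subdiff K F xb"
    and "ys \<in> dual_cone K" and "ys \<noteq> (\<lambda>_. 0)"
  shows "ys \<circ> T \<in> limiting_subdiff {0..} (\<lambda>x. ys ` F x) xb"
proof -
  have "0 \<in> K" using assms(1) unfolding pointed_closed_convex_cone_def by blast
  have "bounded_linear ys" using assms(4) unfolding dual_cone_def by blast
  then obtain c where "0 < c" and bound: "\<And>d. \<bar>ys d\<bar> \<le> c * norm d"
    by (metis bounded_linear.pos_bounded mult.commute real_norm_def)
  obtain xs Ts where "bounded_linear T" and "xs \<longlonglongrightarrow> xb"
    and excess_F: "(\<lambda>n. excess (Epi F K (xs n)) (Epi F K xb)) \<longlonglongrightarrow> 0"
    and frechet: "\<And>n. Ts n \<in> frechet_subdiff K F (xs n)"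
    and pointwise: "\<And>x. (\<lambda>n. Ts n x) \<longlonglongrightarrow> T x"
    using assms(3) unfolding limiting_subdiff_def by blast
  let ?G = "\<lambda>x. ys ` F x"
  have "(\<lambda>n. excess (Epi ?G {0..} (xs n)) (Epi ?G {0..} xb)) \<longlonglongrightarrow> 0"
    using tendsto_excess_Epi_image[OF \<open>0 \<in> K\<close> assms(4) \<open>0 < c\<close> bound assms(2) excess_F] .
  moreover have "ys \<circ> Ts n \<in> frechet_subdiff {0..} ?G (xs n)" for n
    using frechet_subdiff_image[OF \<open>0 \<in> K\<close> assms(4) \<open>0 < c\<close> bound frechet] .
  moreover have "(\<lambda>n. (ys \<circ> Ts n) x) \<longlonglongrightarrow> (ys \<circ> T) x" for x
    using bounded_linear.tendsto[OF \<open>bounded_linear ys\<close> pointwise] by simp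
  moreover have "bounded_linear (ys \<circ> T)"
    using bounded_linear_compose[OF \<open>bounded_linear ys\<close> \<open>bounded_linear T\<close>]
    by (simp add: comp_def)
  ultimately show ?thesis
    unfolding limiting_subdiff_def
    by (intro CollectI conjI exI[of _ xs] exI[of _ "\<lambda>n. ys \<circ> Ts n"] \<open>xs \<longlonglongrightarrow> xb\<close>) auto
qed

end
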